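(* Let $(X,\Sigma,\mu)$ be a semi-finite measure space, and let $E$ be the ideal in $\mathrm{L}^0(X,\Sigma,\mu)$ consisting of (equivalence classes of) measurable functions with $\sigma$-finite supports. Let $A$ be a subset of $E$. Then $A$ is closed in $E$ with respect to the topology of local convergence in measure if and only if $A$ contains the almost everywhere limits (in $E$) of all sequences in $A$.
   Context: $\mathrm{L}^0(X,\Sigma,\mu)$ is the vector lattice of measurable real functions modulo $\mu$-a.e. equality. A measure space is semi-finite if every set of infinite measure contains a measurable subset of finite positive measure. A net $(f_\alpha)$ converges locally in measure to $f$ if $\mu(\{t\in B: |f_\alpha(t)-f(t)|\geq\varepsilon\})\to0$ for every $\varepsilon>0$ and every $B\in\Sigma$ with $\mu(B)<\infty$. *)

theory Defs
  imports "HOL-Analysis.Analysis"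
begin

definition semi_finite_measure :: "'a measure \<Rightarrow> bool" where
  "semi_finite_measure M \<longleftrightarrow>
     (\<forall>S\<in>sets M. emeasure M S = \<infinity> \<longrightarrow>
        (\<exists>T\<in>sets M. T \<subseteq> S \<and> 0 < emeasure M T \<and> emeasure M T < \<infinity>))"

definition sigma_finite_support :: "'a measure \<Rightarrow> ('a \<Rightarrow> real) \<Rightarrow> bool" where
  "sigma_finite_support M f \<longleftrightarrow>
     (\<exists>C :: nat \<Rightarrow> 'a set. range C \<subseteq> sets M \<and> (\<forall>n. emeasure M (C n) < \<infinity>) \<and>
        {x \<in> space M. f x \<noteq> 0} \<subseteq> (\<Union>n. C n))"

text \<open>Representatives of the ideal E of L0 of functions with sigma-finite supports.\<close>
definition sfs_ideal :: "'a measure \<Rightarrow> ('a \<Rightarrow> real) set" where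
  "sfs_ideal M = {f \<in> borel_measurable M. sigma_finite_support M f}"

text \<open>A set of representatives is saturated (= a set of equivalence classes mod a.e.
  equality) inside E.\<close>
definition ae_saturated :: "'a measure \<Rightarrow> ('a \<Rightarrow> real) set \<Rightarrow> ('a \<Rightarrow> real) set \<Rightarrow> bool" where
  "ae_saturated M E A \<longleftrightarrow> (\<forall>f\<in>A. \<forall>g\<in>E. (AE x in M. f x = g x) \<longrightarrow> g \<in> A)"

text \<open>Convergence locally in measure of a net, given as a family indexed along a filter
  (the filter of tails of a directed set).\<close>
definition conv_loc_measure ::
  "'a measure \<Rightarrow> 'i filter \<Rightarrow> ('i \<Rightarrow> 'a \<Rightarrow> real) \<Rightarrow> ('a \<Rightarrow> real) \<Rightarrow> bool" where
  "conv_loc_measure M F fs f \<longleftrightarrow>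
     (\<forall>B\<in>sets M. emeasure M B < \<infinity> \<longrightarrow>
        (\<forall>\<epsilon>>0. ((\<lambda>i. emeasure M {t \<in> B. \<epsilon> \<le> \<bar>fs i t - f t\<bar>}) \<longlongrightarrow> 0) F))"

text \<open>Nets are represented
  by proper filters on the function space itself (identity family).\<close>
definition closed_loc_measure ::
  "'a measure \<Rightarrow> ('a \<Rightarrow> real) set \<Rightarrow> ('a \<Rightarrow> real) set \<Rightarrow> bool" where
  "closed_loc_measure M E A \<longleftrightarrow>
     (\<forall>(F :: ('a \<Rightarrow> real) filter) f. F \<noteq> bot \<and> eventually (\<lambda>g. g \<in> A) F \<and>
        conv_loc_measure M F (\<lambda>g. g) f \<and> f \<in> E \<longrightarrow> f \<in> A)"

end

theory Submission
  imports Defs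
begin

text \<open>A sequence converging almost everywhere converges in measure on every set of finite
  measure, so it is a net converging locally in measure; this gives one direction. Conversely,
  let a net in \<open>A\<close> converge locally in measure to \<open>f\<close>. Choose \<open>g\<^sub>k \<in> A\<close> recursively such
  that \<open>|g\<^sub>k - f| \<ge> 1/(k+1)\<close> only on a set of measure \<open>< 2\<^sup>-\<^sup>k\<close> inside a finite-measure set
  \<open>B\<^sub>k\<close>, where the \<open>B\<^sub>k\<close> exhaust the \<sigma>-finite supports of \<open>f\<close> and of the previously chosen
  \<open>g\<^sub>j\<close>. By Borel-Cantelli \<open>g\<^sub>k \<rightarrow> f\<close> a.e. on the union of these supports, and off it all
  functions vanish.\<close>

lemma AE_LIMSEQ_imp_conv_loc_measure:
  assumes fs_meas: "\<And>n. fs n \<in> borel_measurable M" and f_meas: "f \<in> borel_measurable M"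
    and lim: "AE x in M. (\<lambda>n. fs n x) \<longlonglongrightarrow> f x"
  shows "conv_loc_measure M sequentially fs f"
  unfolding conv_loc_measure_def
proof (intro ballI impI allI)
  fix B and \<epsilon> :: real
  assume B: "B \<in> sets M" "emeasure M B < \<infinity>" and "\<epsilon> > 0"
  define E where "E n = {t \<in> B. \<epsilon> \<le> \<bar>fs n t - f t\<bar>}" for n
  define T where "T n = (\<Union>k\<in>{n..}. E k)" for n
  have E_sets: "E n \<in> sets M" for n
    unfolding E_def using B(1) fs_meas[of n] f_meas by measurable
  then have T_sets: "T n \<in> sets M" for n
    unfolding T_def by auto
  have T_sub_B: "T n \<subseteq> B" for n
    unfolding T_def E_def by auto
  have "decseq T"
    unfolding decseq_def T_def by (auto, meson atLeast_iff order_trans)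
  moreover have "emeasure M (T n) \<noteq> \<infinity>" for n
    using le_less_trans[OF emeasure_mono[OF T_sub_B B(1)] B(2)] by (simp add: less_top)
  ultimately have T_lim: "(\<lambda>n. emeasure M (T n)) \<longlonglongrightarrow> emeasure M (\<Inter>n. T n)"
    using T_sets by (intro Lim_emeasure_decseq) auto
  have "AE x in M. x \<notin> (\<Inter>n. T n)"
    using lim
  proof eventually_elim
    case (elim x)
    then obtain N where "\<And>n. n \<ge> N \<Longrightarrow> \<bar>fs n x - f x\<bar> < \<epsilon>"
      using \<open>\<epsilon> > 0\<close> by (auto simp: tendsto_iff eventually_sequentially dist_real_def)
    then have "x \<notin> T N"
      unfolding T_def E_def by force
    then show ?case by auto
  qed
  moreover have "(\<Inter>n. T n) \<subseteq> space M"
    using T_sub_B[of 0] sets.sets_into_space[OF B(1)] by blast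
  ultimately have "emeasure M (\<Inter>n. T n) = 0"
    using T_sets by (subst (asm) AE_iff_measurable[of "\<Inter>n. T n"]) auto
  with T_lim have T_lim_0: "(\<lambda>n. emeasure M (T n)) \<longlonglongrightarrow> 0"
    by simp
  have E_le_T: "emeasure M (E n) \<le> emeasure M (T n)" for n
    using T_sets by (intro emeasure_mono) (auto simp: T_def)
  show "((\<lambda>n. emeasure M {t \<in> B. \<epsilon> \<le> \<bar>fs n t - f t\<bar>}) \<longlongrightarrow> 0) sequentially"
    unfolding E_def[symmetric]
    by (rule tendsto_sandwich[OF _ _ tendsto_const T_lim_0]) (simp_all add: E_le_T)
qed

lemma conv_loc_measure_filtermap:
  "conv_loc_measure M (filtermap h F) (\<lambda>g. g) f \<longleftrightarrow> conv_loc_measure M F h f"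
  by (simp add: conv_loc_measure_def filterlim_filtermap)

lemma conv_loc_measure_ex_close:
  assumes "F \<noteq> bot" and "eventually (\<lambda>g. g \<in> A) F" and "conv_loc_measure M F (\<lambda>g. g) f"
    and "B \<in> sets M" "emeasure M B < \<infinity>" and "\<epsilon> > 0" and "\<delta> > 0"
  shows "\<exists>g\<in>A. emeasure M {t \<in> B. \<epsilon> \<le> \<bar>g t - f t\<bar>} < \<delta>"
proof -
  have "((\<lambda>g. emeasure M {t \<in> B. \<epsilon> \<le> \<bar>g t - f t\<bar>}) \<longlongrightarrow> 0) F"
    using assms(3-6) unfolding conv_loc_measure_def by blast
  then have "eventually (\<lambda>g. emeasure M {t \<in> B. \<epsilon> \<le> \<bar>g t - f t\<bar>} < \<delta>) F"
    using \<open>\<delta> > 0\<close> by (rule order_tendstoD)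
  with assms(2) have "eventually (\<lambda>g. g \<in> A \<and> emeasure M {t \<in> B. \<epsilon> \<le> \<bar>g t - f t\<bar>} < \<delta>) F"
    by (rule eventually_conj)
  then show ?thesis
    using eventually_happens'[OF assms(1)] by blast
qed

lemma sigma_finite_support_incseq_cover:
  assumes "sigma_finite_support M g"
  shows "\<exists>C. incseq C \<and> range C \<subseteq> sets M \<and> (\<forall>n. emeasure M (C n) < \<infinity>) \<and>
    {x \<in> space M. g x \<noteq> 0} \<subseteq> (\<Union>n. C n)"
proof -
  obtain C :: "nat \<Rightarrow> 'a set" where C: "range C \<subseteq> sets M" "\<And>n. emeasure M (C n) < \<infinity>"
    "{x \<in> space M. g x \<noteq> 0} \<subseteq> (\<Union>n. C n)"
    using assms unfolding sigma_finite_support_def by blast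
  define C' where "C' n = (\<Union>i\<le>n. C i)" for n
  have "emeasure M (C' n) < \<infinity>" for n
  proof -
    have "emeasure M (C' n) \<le> (\<Sum>i\<le>n. emeasure M (C i))"
      unfolding C'_def using C(1) by (intro emeasure_subadditive_finite) auto
    also have "\<dots> < \<infinity>"
      using C(2) by (simp add: less_top)
    finally show ?thesis .
  qed
  moreover have "incseq C'" "range C' \<subseteq> sets M" "{x \<in> space M. g x \<noteq> 0} \<subseteq> (\<Union>n. C' n)"
    using C(1,3) by (force simp: C'_def incseq_def)+
  ultimately show ?thesis
    by blast
qed

lemma AE_LIMSEQ_where_eventually_in:
  fixes gs :: "nat \<Rightarrow> 'a \<Rightarrow> real" and \<epsilon> \<delta> :: "nat \<Rightarrow> real"
  assumes [measurable]: "\<And>k. B k \<in> sets M" "\<And>k. gs k \<in> borel_measurable M" "f \<in> borel_measurable M"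
    and "\<epsilon> \<longlonglongrightarrow> 0" and "summable \<delta>" and "\<And>k. 0 \<le> \<delta> k"
    and small: "\<And>k. emeasure M {t \<in> B k. \<epsilon> k \<le> \<bar>gs k t - f t\<bar>} \<le> ennreal (\<delta> k)"
  shows "AE x in M. eventually (\<lambda>k. x \<in> B k) sequentially \<longrightarrow> (\<lambda>k. gs k x) \<longlonglongrightarrow> f x"
proof -
  define E where "E k = {t \<in> B k. \<epsilon> k \<le> \<bar>gs k t - f t\<bar>}" for k
  have E_sets [measurable]: "E k \<in> sets M" for k
    unfolding E_def by measurable
  have E_fin: "emeasure M (E k) < \<infinity>" for k
    using order.strict_trans1[OF small ennreal_less_top] unfolding E_def by simp
  have E_bound: "measure M (E k) \<le> \<delta> k" for k
    using \<open>0 \<le> \<delta> k\<close> small[of k] unfolding measure_def E_def by (rule enn2real_leI)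
  have "summable (\<lambda>k. measure M (E k))"
    by (rule summable_comparison_test'[OF \<open>summable \<delta>\<close>]) (simp add: E_bound)
  then have "AE x in M. eventually (\<lambda>k. x \<in> space M - E k) sequentially"
    using E_fin by (intro borel_cantelli_AE1) auto
  then show ?thesis
  proof eventually_elim
    case (elim x)
    show ?case
    proof
      assume "eventually (\<lambda>k. x \<in> B k) sequentially"
      with elim have "eventually (\<lambda>k. norm (gs k x - f x) \<le> \<epsilon> k) sequentially"
        by eventually_elim (auto simp: E_def)
      then have "(\<lambda>k. gs k x - f x) \<longlonglongrightarrow> 0"
        using \<open>\<epsilon> \<longlonglongrightarrow> 0\<close> by (rule Lim_null_comparison)
      then show "(\<lambda>k. gs k x) \<longlonglongrightarrow> f x"
        by (simp add: LIM_zero_iff)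
    qed
  qed
qed

lemma sfs_ideal_obtain_covers:
  fixes M :: "'a measure"
  obtains cover :: "('a \<Rightarrow> real) \<Rightarrow> nat \<Rightarrow> 'a set"
  where "\<And>g m n. g \<in> sfs_ideal M \<Longrightarrow> m \<le> n \<Longrightarrow> cover g m \<subseteq> cover g n"
    "\<And>g n. g \<in> sfs_ideal M \<Longrightarrow> cover g n \<in> sets M \<and> emeasure M (cover g n) < \<infinity>"
    "\<And>g x. g \<in> sfs_ideal M \<Longrightarrow> x \<in> space M \<Longrightarrow> g x \<noteq> 0 \<Longrightarrow> \<exists>n. x \<in> cover g n"
proof -
  have "\<forall>g\<in>sfs_ideal M. \<exists>C. incseq C \<and> range C \<subseteq> sets M \<and> (\<forall>n. emeasure M (C n) < \<infinity>) \<and>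
      {x \<in> space M. g x \<noteq> 0} \<subseteq> (\<Union>n. C n)"
    using sigma_finite_support_incseq_cover unfolding sfs_ideal_def by blast
  from bchoice[OF this] obtain cover where cover: "\<forall>g\<in>sfs_ideal M. incseq (cover g) \<and>
      range (cover g) \<subseteq> sets M \<and> (\<forall>n. emeasure M (cover g n) < \<infinity>) \<and>
      {x \<in> space M. g x \<noteq> 0} \<subseteq> (\<Union>n. cover g n)" ..
  show thesis
  proof (rule that)
    show "cover g m \<subseteq> cover g n" if "g \<in> sfs_ideal M" "m \<le> n" for g m n
      using cover that by (auto simp: incseq_def)
    show "cover g n \<in> sets M \<and> emeasure M (cover g n) < \<infinity>" if "g \<in> sfs_ideal M" for g n
      using cover that by blast
    show "\<exists>n. x \<in> cover g n" if "g \<in> sfs_ideal M" "x \<in> space M" "g x \<noteq> 0" for g x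
      using cover that by blast
  qed
qed

lemma eventually_in_diagonal:
  assumes mono_left: "\<And>j k n. j \<le> k \<Longrightarrow> D j n \<subseteq> D k n"
    and mono_right: "\<And>k m n. m \<le> n \<Longrightarrow> D k m \<subseteq> D k n"
    and "x \<in> D j m"
  shows "eventually (\<lambda>k. x \<in> D k k) sequentially"
proof -
  have "x \<in> D k k" if "k \<ge> max j m" for k
    using mono_left[of j k m] mono_right[of m k k] \<open>x \<in> D j m\<close> that by auto
  then show ?thesis
    unfolding eventually_sequentially by blast
qed

lemma sfs_ideal_obtain_exhausting_sets:
  assumes f: "f \<in> sfs_ideal M"
    and pick: "\<And>B k. B \<in> sets M \<Longrightarrow> emeasure M B < \<infinity> \<Longrightarrow> pick B k \<in> sfs_ideal M"
  obtains B where "\<And>k. B k \<in> sets M" "\<And>k. emeasure M (B k) < \<infinity>"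
    "\<And>x. x \<in> space M \<Longrightarrow> f x \<noteq> 0 \<or> (\<exists>j. pick (B j) j x \<noteq> 0) \<Longrightarrow>
      eventually (\<lambda>k. x \<in> B k) sequentially"
proof -
  obtain cover :: "_ \<Rightarrow> nat \<Rightarrow> _"
    where cover_mono: "\<And>g m n. g \<in> sfs_ideal M \<Longrightarrow> m \<le> n \<Longrightarrow> cover g m \<subseteq> cover g n"
    and cover_fin: "\<And>g n. g \<in> sfs_ideal M \<Longrightarrow> cover g n \<in> sets M \<and> emeasure M (cover g n) < \<infinity>"
    and cover_support: "\<And>g x. g \<in> sfs_ideal M \<Longrightarrow> x \<in> space M \<Longrightarrow> g x \<noteq> 0 \<Longrightarrow> \<exists>n. x \<in> cover g n"
    using sfs_ideal_obtain_covers[of M] by blast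
  \<comment> \<open>\<open>D k\<close> is an increasing cover of the supports of \<open>f\<close> and of \<open>gs j\<close> for \<open>j < k\<close>.\<close>
  define D where "D = rec_nat (cover f) (\<lambda>k D n. D n \<union> cover (pick (D k) k) n)"
  define gs where "gs k = pick (D k k) k" for k
  have D_0: "D 0 = cover f" and D_Suc: "D (Suc k) n = D k n \<union> cover (gs k) n" for k n
    by (simp_all add: D_def gs_def)
  have D_fin: "D k n \<in> sets M \<and> emeasure M (D k n) < \<infinity>" for k n
  proof (induction k arbitrary: n)
    case 0
    show ?case
      using cover_fin[OF f] by (simp add: D_0)
  next
    case (Suc k)
    have "cover (gs k) n \<in> sets M" "emeasure M (cover (gs k) n) < \<infinity>"
      using cover_fin pick Suc[of k] by (auto simp: gs_def)
    moreover have
      "emeasure M (D k n \<union> cover (gs k) n) \<le> emeasure M (D k n) + emeasure M (cover (gs k) n)"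
      using Suc[of n] calculation by (intro emeasure_subadditive) auto
    ultimately show ?case
      using Suc[of n] by (auto simp: D_Suc intro: le_less_trans)
  qed
  then have gs_sfs: "gs k \<in> sfs_ideal M" for k
    unfolding gs_def by (intro pick) auto
  have D_mono_right: "D k m \<subseteq> D k n" if "m \<le> n" for k m n
  proof (induction k)
    case 0
    show ?case
      using cover_mono[OF f \<open>m \<le> n\<close>] by (simp add: D_0)
  next
    case (Suc k)
    then show ?case
      using cover_mono[OF gs_sfs \<open>m \<le> n\<close>] by (auto simp: D_Suc)
  qed
  have D_mono_left: "D j n \<subseteq> D k n" if "j \<le> k" for j k n
    using lift_Suc_mono_le[of "\<lambda>k. D k n" j k] that by (auto simp: D_Suc)
  have f_in_D: "\<exists>m. x \<in> D 0 m" if "x \<in> space M" "f x \<noteq> 0" for x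
    using cover_support[OF f that] by (simp add: D_0)
  have gs_in_D: "\<exists>m. x \<in> D (Suc j) m" if "x \<in> space M" "gs j x \<noteq> 0" for x j
    using cover_support[OF gs_sfs that] by (auto simp: D_Suc)
  have "eventually (\<lambda>k. x \<in> D k k) sequentially"
    if x: "x \<in> space M" and "f x \<noteq> 0 \<or> (\<exists>j. gs j x \<noteq> 0)" for x
  proof -
    from that obtain j m where "x \<in> D j m"
      using f_in_D[OF x] gs_in_D[OF x] by blast
    then show ?thesis
      using eventually_in_diagonal[of D, OF D_mono_left D_mono_right] by blast
  qed
  then show thesis
    using that[of "\<lambda>k. D k k"] D_fin by (simp add: gs_def)
qed

lemma sfs_ideal_obtain_close_sequence:
  assumes A: "A \<subseteq> sfs_ideal M" and f: "f \<in> sfs_ideal M"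
    and close: "\<And>B \<epsilon> \<delta>. B \<in> sets M \<Longrightarrow> emeasure M B < \<infinity> \<Longrightarrow> 0 < \<epsilon> \<Longrightarrow> 0 < \<delta> \<Longrightarrow>
      \<exists>g\<in>A. emeasure M {t \<in> B. \<epsilon> \<le> \<bar>g t - f t\<bar>} < \<delta>"
  obtains gs B where "\<And>k. gs k \<in> A" "\<And>k. B k \<in> sets M"
    "\<And>k. emeasure M {t \<in> B k. 1 / Suc k \<le> \<bar>gs k t - f t\<bar>} < ennreal ((1/2)^k)"
    "\<And>x. x \<in> space M \<Longrightarrow> f x \<noteq> 0 \<or> (\<exists>j. gs j x \<noteq> 0) \<Longrightarrow> eventually (\<lambda>k. x \<in> B k) sequentially"
proof -
  define good where "good B k g \<longleftrightarrow>
    g \<in> A \<and> emeasure M {t \<in> B. 1 / Suc k \<le> \<bar>g t - f t\<bar>} < ennreal ((1/2)^k)" for B k g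
  define pick where "pick B k = (SOME g. good B k g)" for B k
  have pick: "good B k (pick B k)" if "B \<in> sets M" "emeasure M B < \<infinity>" for B k
  proof -
    have "\<exists>g. good B k g"
      using close[OF that, of "1 / Suc k" "ennreal ((1/2)^k)"] by (auto simp: good_def)
    then show ?thesis
      unfolding pick_def by (rule someI_ex)
  qed
  then have "pick B k \<in> sfs_ideal M" if "B \<in> sets M" "emeasure M B < \<infinity>" for B k
    using A that by (auto simp: good_def)
  then obtain B where B: "\<And>k. B k \<in> sets M" "\<And>k. emeasure M (B k) < \<infinity>"
    and exhaust: "\<And>x. x \<in> space M \<Longrightarrow> f x \<noteq> 0 \<or> (\<exists>j. pick (B j) j x \<noteq> 0) \<Longrightarrow>
      eventually (\<lambda>k. x \<in> B k) sequentially"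
    using sfs_ideal_obtain_exhausting_sets[OF f] by blast
  show thesis
  proof (rule that[of "\<lambda>k. pick (B k) k" B])
    show "pick (B k) k \<in> A"
      and "emeasure M {t \<in> B k. 1 / Suc k \<le> \<bar>pick (B k) k t - f t\<bar>} < ennreal ((1/2)^k)" for k
      using pick[OF B(1,2)] by (simp_all add: good_def)
  qed (use B exhaust in auto)
qed

lemma sfs_ideal_obtain_AE_LIMSEQ:
  assumes "A \<subseteq> sfs_ideal M" and f: "f \<in> sfs_ideal M"
    and "\<And>B \<epsilon> \<delta>. B \<in> sets M \<Longrightarrow> emeasure M B < \<infinity> \<Longrightarrow> 0 < \<epsilon> \<Longrightarrow> 0 < \<delta> \<Longrightarrow>
      \<exists>g\<in>A. emeasure M {t \<in> B. \<epsilon> \<le> \<bar>g t - f t\<bar>} < \<delta>"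
  obtains gs where "\<And>k. gs k \<in> A" "AE x in M. (\<lambda>k. gs k x) \<longlonglongrightarrow> f x"
proof -
  obtain gs B where gs: "\<And>k. gs k \<in> A" and B: "\<And>k. B k \<in> sets M"
    and small: "\<And>k. emeasure M {t \<in> B k. 1 / Suc k \<le> \<bar>gs k t - f t\<bar>} < ennreal ((1/2)^k)"
    and exhaust: "\<And>x. x \<in> space M \<Longrightarrow> f x \<noteq> 0 \<or> (\<exists>j. gs j x \<noteq> 0) \<Longrightarrow>
      eventually (\<lambda>k. x \<in> B k) sequentially"
    using sfs_ideal_obtain_close_sequence[OF assms] by blast
  have gs_meas: "gs k \<in> borel_measurable M" for k
    using gs \<open>A \<subseteq> sfs_ideal M\<close> by (auto simp: sfs_ideal_def)
  have "AE x in M. eventually (\<lambda>k. x \<in> B k) sequentially \<longrightarrow> (\<lambda>k. gs k x) \<longlonglongrightarrow> f x"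
  proof (rule AE_LIMSEQ_where_eventually_in[where \<epsilon>="\<lambda>k. 1 / Suc k" and \<delta>="\<lambda>k. (1/2)^k"])
    show "(\<lambda>k. 1 / real (Suc k)) \<longlonglongrightarrow> 0"
      using LIMSEQ_inverse_real_of_nat by (simp add: inverse_eq_divide)
    show "summable (\<lambda>k. (1/2::real)^k)"
      by (rule summable_geometric) simp
    show "emeasure M {t \<in> B k. 1 / Suc k \<le> \<bar>gs k t - f t\<bar>} \<le> ennreal ((1/2)^k)" for k
      using small[of k] by (rule less_imp_le)
  qed (use B gs_meas f in \<open>auto simp: sfs_ideal_def\<close>)
  with AE_space have "AE x in M. (\<lambda>k. gs k x) \<longlonglongrightarrow> f x"
  proof eventually_elim
    case (elim x)
    show ?case
    proof (cases "f x \<noteq> 0 \<or> (\<exists>j. gs j x \<noteq> 0)")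
      case True
      then show ?thesis
        using elim exhaust by blast
    next
      case False
      then show ?thesis
        by simp
    qed
  qed
  with gs show thesis
    using that by blast
qed

lemma closed_loc_measure_imp_AE_LIMSEQ_mem:
  assumes "closed_loc_measure M E A" and "A \<subseteq> borel_measurable M"
    and fs: "\<And>n. fs n \<in> A" and f: "f \<in> E" "f \<in> borel_measurable M"
    and "AE x in M. (\<lambda>n. fs n x) \<longlonglongrightarrow> f x"
  shows "f \<in> A"
proof -
  have "conv_loc_measure M (filtermap fs sequentially) (\<lambda>g. g) f"
    unfolding conv_loc_measure_filtermap using assms by (intro AE_LIMSEQ_imp_conv_loc_measure) auto
  moreover have "filtermap fs sequentially \<noteq> bot"
    by (simp add: filtermap_bot_iff)
  moreover have "eventually (\<lambda>g. g \<in> A) (filtermap fs sequentially)"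
    using fs by (simp add: eventually_filtermap)
  ultimately show "f \<in> A"
    using assms(1) f unfolding closed_loc_measure_def by blast
qed

lemma closed_loc_measure_sfs_idealI:
  assumes "A \<subseteq> sfs_ideal M"
    and seq_closed: "\<And>fs f. (\<And>n. fs n \<in> A) \<Longrightarrow> f \<in> sfs_ideal M \<Longrightarrow>
      AE x in M. (\<lambda>n. fs n x) \<longlonglongrightarrow> f x \<Longrightarrow> f \<in> A"
  shows "closed_loc_measure M (sfs_ideal M) A"
  unfolding closed_loc_measure_def
proof (intro allI impI, elim conjE)
  fix F :: "('a \<Rightarrow> real) filter" and f
  assume net: "F \<noteq> bot" "eventually (\<lambda>g. g \<in> A) F" "conv_loc_measure M F (\<lambda>g. g) f"
    and f: "f \<in> sfs_ideal M"
  obtain gs where "\<And>k. gs k \<in> A" "AE x in M. (\<lambda>k. gs k x) \<longlonglongrightarrow> f x"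
    using sfs_ideal_obtain_AE_LIMSEQ[OF assms(1) f conv_loc_measure_ex_close[OF net]] by blast
  then show "f \<in> A"
    using seq_closed f by blast
qed

theorem corollary5p17:
  fixes M :: "'a measure" and A :: "('a \<Rightarrow> real) set"
  assumes "semi_finite_measure M"
    and "A \<subseteq> sfs_ideal M"
    and "ae_saturated M (sfs_ideal M) A"
  shows "closed_loc_measure M (sfs_ideal M) A \<longleftrightarrow>
    (\<forall>(fs :: nat \<Rightarrow> 'a \<Rightarrow> real) f. (\<forall>n. fs n \<in> A) \<and> f \<in> sfs_ideal M \<and>
        (AE x in M. (\<lambda>n. fs n x) \<longlonglongrightarrow> f x) \<longrightarrow> f \<in> A)"
proof -
  have "A \<subseteq> borel_measurable M" "sfs_ideal M \<subseteq> borel_measurable M"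
    using assms(2) by (auto simp: sfs_ideal_def)
  then show ?thesis
    using closed_loc_measure_imp_AE_LIMSEQ_mem[of M "sfs_ideal M" A]
      closed_loc_measure_sfs_idealI[OF assms(2)] by blast
qed

end
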